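(* Let $n\ge 2$ and let $k_1,\dots,k_n$ be positive integers with $\sum_{i=1}^n \frac{1}{k_i}=1$. Let $k=\operatorname{lcm}(k_1,\dots,k_n)$ and $w_i=k/k_i$ (so $\sum_i w_i=k$). Then for every real $x\in[\frac1k,1)$, $$\lfloor kx\rfloor-\sum_{i=1}^n\lfloor w_i x\rfloor\ \ge\ 1 .$$
   Context: $\lfloor y\rfloor$ denotes the integer part (floor) of a real number $y$. *)

theory Defs
  imports Complex_Main
begin

end

theory Submission
  imports Defs
begin

(* Let L = lcm(k_1,...,k_n), w_i = L / k_i and t = floor(L x).  Two facts
   combine to give the theorem.
   (1) Floors scale subadditively: k_i * floor(w_i x) <= floor(k_i w_i x) = t,
       i.e. m_i := floor(w_i x) is an integer with m_i k_i <= t.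
   (2) If sum 1/k_i = 1 and integers m_i satisfy m_i k_i <= t, then
       sum m_i <= sum t/k_i = t, and the inequality is strict as soon as one
       k_i does not divide t (for that index m_i < t/k_i).
   Since 1 <= L x < L we have 0 < t < L, so L does not divide t, hence some
   k_i does not divide t (otherwise their lcm L would), and (2) yields
   sum_i floor(w_i x) < floor(L x), which is the claim. *)

lemma of_nat_mult_floor_le_floor:
  fixes y :: real
  shows "int k * \<lfloor>y\<rfloor> \<le> \<lfloor>real k * y\<rfloor>"
proof -
  have "real k * real_of_int \<lfloor>y\<rfloor> \<le> real k * y"
    by (intro mult_left_mono) simp_all
  then show ?thesis
    by (simp add: le_floor_iff)
qed

lemma sum_below_unit_fractions_strict:
  fixes k :: "'a \<Rightarrow> nat" and m :: "'a \<Rightarrow> int" and t :: int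
  assumes fin: "finite I"
    and pos: "\<forall>i\<in>I. k i > 0"
    and unit: "(\<Sum>i\<in>I. 1 / real (k i)) = 1"
    and bound: "\<forall>i\<in>I. m i * int (k i) \<le> t"
    and nondvd: "\<exists>i\<in>I. \<not> int (k i) dvd t"
  shows "(\<Sum>i\<in>I. m i) < t"
proof -
  have le: "real_of_int (m i) \<le> real_of_int t / real (k i)" if "i \<in> I" for i
  proof -
    have "real_of_int (m i) * real (k i) \<le> real_of_int t"
      using bound that by (metis of_int_le_iff of_int_mult of_int_of_nat_eq)
    then show ?thesis using pos that by (simp add: field_simps)
  qed
  obtain j where j: "j \<in> I" "\<not> int (k j) dvd t" using nondvd by blast
  have lt: "real_of_int (m j) < real_of_int t / real (k j)"
  proof -
    have "m j * int (k j) \<noteq> t" using j(2) by (metis dvd_triv_right)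
    then have "m j * int (k j) < t" using bound j(1) by fastforce
    then have "real_of_int (m j) * real (k j) < real_of_int t"
      by (metis of_int_less_iff of_int_mult of_int_of_nat_eq)
    then show ?thesis using pos j(1) by (simp add: field_simps)
  qed
  have "(\<Sum>i\<in>I. real_of_int (m i)) < (\<Sum>i\<in>I. real_of_int t / real (k i))"
    using fin le j(1) lt by (intro sum_strict_mono_ex1) auto
  also have "\<dots> = real_of_int t"
    using unit by (simp add: sum_distrib_left[symmetric] divide_inverse)
  finally show ?thesis by (metis of_int_less_iff of_int_sum)
qed

lemma exists_nondvd_below_Lcm:
  fixes k :: "'a \<Rightarrow> nat" and t :: int
  assumes "0 < t" "t < int (Lcm (k ` I))"
  shows "\<exists>i\<in>I. \<not> int (k i) dvd t"
proof (rule ccontr)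
  assume "\<not> ?thesis"
  then have "\<forall>i\<in>I. k i dvd nat t"
    using assms(1) by (metis of_nat_dvd_iff int_nat_eq not_less order.strict_iff_not)
  then have "Lcm (k ` I) dvd nat t" by (auto intro: Lcm_least)
  moreover have "0 < nat t" "nat t < Lcm (k ` I)" using assms by auto
  ultimately show False using nat_dvd_not_less by blast
qed

theorem mainTheorem2:
  fixes n :: nat and ks :: "nat \<Rightarrow> nat" and x :: real
  assumes "n \<ge> 2"
    and "\<forall>i\<in>{1..n}. ks i > 0"
    and "(\<Sum>i=1..n. 1 / real (ks i)) = 1"
    and "1 / real (Lcm (ks ` {1..n})) \<le> x" and "x < 1"
  shows "\<lfloor>real (Lcm (ks ` {1..n})) * x\<rfloor>
           - (\<Sum>i=1..n. \<lfloor>real (Lcm (ks ` {1..n}) div ks i) * x\<rfloor>) \<ge> 1"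
proof -
  define L where "L = Lcm (ks ` {1..n})"
  have "L \<noteq> 0"
    using assms(2) by (auto simp: L_def Lcm_0_iff)
  then have L_pos: "real L > 0" by simp
  have t_range: "0 < \<lfloor>real L * x\<rfloor>" "\<lfloor>real L * x\<rfloor> < int L"
    using assms(4,5) L_pos unfolding L_def[symmetric]
    by (simp_all add: field_simps floor_less_iff)
  have bound: "\<lfloor>real (L div ks i) * x\<rfloor> * int (ks i) \<le> \<lfloor>real L * x\<rfloor>"
    if "i \<in> {1..n}" for i
  proof -
    have "L div ks i * ks i = L"
      using that by (simp add: L_def dvd_Lcm)
    then have "real (ks i) * (real (L div ks i) * x) = real L * x"
      by (metis mult.assoc mult.commute of_nat_mult)
    then show ?thesis
      using of_nat_mult_floor_le_floor[of "ks i" "real (L div ks i) * x"]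
      by (metis mult.commute)
  qed
  have "(\<Sum>i=1..n. \<lfloor>real (L div ks i) * x\<rfloor>) < \<lfloor>real L * x\<rfloor>"
    using assms(2,3) bound exists_nondvd_below_Lcm[OF t_range[unfolded L_def]]
    by (intro sum_below_unit_fractions_strict) (auto simp: L_def)
  then show ?thesis unfolding L_def by simp
qed

end
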